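(* Let $(\lambda,\vartheta,\zeta_0)$ be fluid model data as in the context with $z_0>0$, and suppose $F_0(x,y)=\mathbf P(B^0\ge x;D^0\ge y)$ satisfies $|F_0(x,y)-F_0(x,y')|\le L|y-y'|$ for all $x,y,y'$. Let $\zeta(\cdot)$ be a measure valued fluid model solution with total mass $z(\cdot)$, let $S(0,s)=\int_0^sz(u)^{-1}du$, $\widetilde S(t)=\inf\{s:S(0,s)\ge t\}$, and $\widetilde\zeta(t)(x,y)=\zeta(\widetilde S(t))([x,\infty]\times[y,\infty])$. Then for all $x,y,y'\ge0$ and all $t\ge0$, $$|\widetilde\zeta(t)(x,y)-\widetilde\zeta(t)(x,y')|\le(z_0L+\lambda)|y-y'|.$$
   Context: $\overline{\mathbb R}_+=[0,\infty]$; $\mathbf M_1$ the finite nonnegative Borel measures on $\overline{\mathbb R}_+^2$ with the weak topology. Fluid model data: $\lambda>0$; $\vartheta$ a Borel probability measure on $\overline{\mathbb R}_+^2$ with $\vartheta(\{0\}\times\overline{\mathbb R}_+)=\vartheta(\overline{\mathbb R}_+\times\{0\})=\vartheta(\{(\infty,\infty)\})=0$, $(B,D)$ a random pair with law $\vartheta$, $\rho=\lambda\mathbf E[B]>1$; $\zeta_0\in\mathbf M_1$ with marginals free of atoms in $[0,\infty)$, total mass $z_0$, and $(B^0,D^0)$ with law $\zeta_0/z_0$. Corner sets $\mathcal C=\{[x,\infty)\times[y,\infty):x,y\in[0,\infty)\}\cup\{[x,\infty]\times[y,\infty]:x,y\in\overline{\mathbb R}_+\}$. A measure valued fluid model solution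 is a continuous $\zeta:[0,\infty)\to\mathbf M_1$ with total mass $z(t)$, $S(u,v)=\int_u^vz(s)^{-1}ds$, such that $\inf_{t>a}z(t)>0$ for all $a>0$ and $\zeta(t)(C)=\zeta_0(C+(S(0,t),t))+\lambda\int_0^t\vartheta(C+(S(s,t),t-s))ds$ for $C\in\mathcal C$, $t\ge0$ ($A+w=\{a+w:a\in A\}$). *)

theory Defs
  imports "HOL-Probability.Probability"
begin

text \<open>The extended half line [0,\<infinity>] is modelled by the type ennreal; the space
  [0,\<infinity>]^2 by ennreal \<times> ennreal with its Borel sigma algebra.\<close>

definition borel_finite :: "(ennreal \<times> ennreal) measure \<Rightarrow> bool" where
  "borel_finite M \<longleftrightarrow> sets M = sets borel \<and> finite_measure M"

definition shift :: "(ennreal \<times> ennreal) set \<Rightarrow> real \<Rightarrow> real \<Rightarrow> (ennreal \<times> ennreal) set" where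
  "shift A a c = (\<lambda>(u, v). (u + ennreal a, v + ennreal c)) ` A"

definition corner_sets :: "(ennreal \<times> ennreal) set set" where
  "corner_sets =
     {{x..<\<infinity>} \<times> {y..<\<infinity>} | x y. x \<noteq> \<infinity> \<and> y \<noteq> \<infinity>}
     \<union> {{x..} \<times> {y..} | x y. True}"

definition fluid_data ::
  "real \<Rightarrow> (ennreal \<times> ennreal) measure \<Rightarrow> (ennreal \<times> ennreal) measure \<Rightarrow> bool" where
  "fluid_data lam \<theta> \<zeta>0 \<longleftrightarrow>
     lam > 0 \<and>
     prob_space \<theta> \<and> sets \<theta> = sets borel \<and>
     measure \<theta> ({0} \<times> UNIV) = 0 \<and> measure \<theta> (UNIV \<times> {0}) = 0 \<and>
     measure \<theta> {(\<infinity>, \<infinity>)} = 0 \<and>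
     ennreal lam * (\<integral>\<^sup>+ p. fst p \<partial>\<theta>) > 1 \<and>
     borel_finite \<zeta>0 \<and>
     (\<forall>x. x \<noteq> \<infinity> \<longrightarrow> measure \<zeta>0 ({x} \<times> UNIV) = 0 \<and> measure \<zeta>0 (UNIV \<times> {x}) = 0)"

definition total_mass :: "(real \<Rightarrow> (ennreal \<times> ennreal) measure) \<Rightarrow> real \<Rightarrow> real" where
  "total_mass \<zeta> t = measure (\<zeta> t) UNIV"

definition Sfun :: "(real \<Rightarrow> (ennreal \<times> ennreal) measure) \<Rightarrow> real \<Rightarrow> real \<Rightarrow> real" where
  "Sfun \<zeta> u v = integral {u..v} (\<lambda>s. 1 / total_mass \<zeta> s)"

text \<open>Continuity into the finite Borel measures with the weak topology: integrals of
  continuous (hence bounded, the space being compact) real functions vary continuously.\<close>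
definition weakly_continuous :: "(real \<Rightarrow> (ennreal \<times> ennreal) measure) \<Rightarrow> bool" where
  "weakly_continuous \<zeta> \<longleftrightarrow>
     (\<forall>t\<ge>0. borel_finite (\<zeta> t)) \<and>
     (\<forall>f :: ennreal \<times> ennreal \<Rightarrow> real. continuous_on UNIV f \<longrightarrow>
        continuous_on {0..} (\<lambda>t. \<integral> p. f p \<partial>(\<zeta> t)))"

definition fluid_solution ::
  "real \<Rightarrow> (ennreal \<times> ennreal) measure \<Rightarrow> (ennreal \<times> ennreal) measure
     \<Rightarrow> (real \<Rightarrow> (ennreal \<times> ennreal) measure) \<Rightarrow> bool" where
  "fluid_solution lam \<theta> \<zeta>0 \<zeta> \<longleftrightarrow>
     weakly_continuous \<zeta> \<and>
     (\<forall>a>0. (INF t\<in>{a<..}. total_mass \<zeta> t) > 0) \<and>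
     (\<forall>C\<in>corner_sets. \<forall>t\<ge>0.
        measure (\<zeta> t) C =
          measure \<zeta>0 (shift C (Sfun \<zeta> 0 t) t)
          + lam * integral {0..t} (\<lambda>s. measure \<theta> (shift C (Sfun \<zeta> s t) (t - s))))"

definition Stilde :: "(real \<Rightarrow> (ennreal \<times> ennreal) measure) \<Rightarrow> real \<Rightarrow> real" where
  "Stilde \<zeta> t = Inf {s. 0 \<le> s \<and> t \<le> Sfun \<zeta> 0 s}"

definition zeta_tilde ::
  "(real \<Rightarrow> (ennreal \<times> ennreal) measure) \<Rightarrow> real \<Rightarrow> real \<Rightarrow> real \<Rightarrow> real" where
  "zeta_tilde \<zeta> t x y = measure (\<zeta> (Stilde \<zeta> t)) ({ennreal x..} \<times> {ennreal y..})"

end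

theory Submission
  imports Defs
begin

text \<open>Evaluating the fluid model equation on the corner [x,\<infinity>] \<times> [y,\<infinity>] at time s = S~(t)
  splits \<zeta>(s) into the initial term \<zeta>0([x + S(0,s),\<infinity>] \<times> [y + s,\<infinity>]), which inherits the
  Lipschitz constant z0 L from F0, and \<lambda> times the arrival term
  \<integral>_0^s \<vartheta>([x + S(u,s),\<infinity>] \<times> [y + s - u,\<infinity>]) du. Raising y to y' removes from each arrival
  integrand at most the mass lost by the marginal tail G(w) = \<vartheta>([0,\<infinity>] \<times> [w,\<infinity>]) between
  y + s - u and y' + s - u. Integrated over u these are integrals of G over two windows of
  length s that are y' - y apart, and 0 \<le> G \<le> 1 bounds their difference by y' - y.\<close>

lemma shift_Times:
  "shift (A \<times> B) a c = (\<lambda>u. u + ennreal a) ` A \<times> (\<lambda>v. v + ennreal c) ` B"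
  unfolding shift_def by (auto simp: image_iff)

lemma ennreal_add_image_atLeast:
  fixes X E :: ennreal
  assumes "E \<noteq> \<infinity>"
  shows "(\<lambda>u. u + E) ` {X..} = {X + E..}"
proof
  show "(\<lambda>u. u + E) ` {X..} \<subseteq> {X + E..}"
    by (auto intro: add_right_mono)
  show "{X + E..} \<subseteq> (\<lambda>u. u + E) ` {X..}"
  proof
    fix w assume "w \<in> {X + E..}"
    then have w: "X + E \<le> w" by simp
    then have "E \<le> w" by (metis add.commute add_increasing2 zero_le order_trans order_refl)
    then have "w = (w - E) + E" by (simp add: diff_add_cancel_ennreal)
    moreover have "X \<le> w - E" using w assms by (simp add: ennreal_le_minus_iff)
    ultimately show "w \<in> (\<lambda>u. u + E) ` {X..}" by (metis atLeast_iff image_eqI)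
  qed
qed

lemma shift_corner: "shift ({X..} \<times> {Y..}) a c = {X + ennreal a..} \<times> {Y + ennreal c..}"
  by (simp add: shift_Times ennreal_add_image_atLeast)

lemma corner_in_corner_sets: "{X..} \<times> {Y..} \<in> corner_sets"
  unfolding corner_sets_def by blast

lemma UNIV_eq_corner: "(UNIV :: (ennreal \<times> ennreal) set) = {0..} \<times> {0..}"
  by auto

lemma integral_reflect_shift_Icc:
  fixes s c :: real
  shows "integral {0..s} (\<lambda>u. f (c - u)) = integral {c - s..c} f"
proof -
  have "integral {c - s..c} f = integral {-s..-0} ((\<lambda>v. f (c - v)) \<circ> uminus)"
    using integral_shift_Icc_real[of "-s" 0 f c] by (simp add: comp_def algebra_simps)
  also have "\<dots> = integral {0..s} (\<lambda>v. f (c - v))"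
    using Henstock_Kurzweil_Integration.integral_reflect_real[of s 0 "\<lambda>v. f (c - v)"] by (simp add: comp_def)
  finally show ?thesis ..
qed

lemma integral_window_diff_le:
  fixes G :: "real \<Rightarrow> real"
  assumes G_int: "\<And>a b. G integrable_on {a..b}" and G_nonneg: "\<And>w. 0 \<le> G w"
    and G_le: "\<And>w. G w \<le> c" and "y \<le> y'" "0 \<le> s"
  shows "integral {y..y+s} G - integral {y'..y'+s} G \<le> c * (y' - y)"
proof -
  have le: "integral {a..b} G \<le> c * (b - a)" if "a \<le> b" for a b
  proof -
    have "integral {a..b} G \<le> integral {a..b} (\<lambda>_. c)"
      by (rule integral_le) (use G_int G_le in auto)
    then show ?thesis using that by (simp add: mult.commute)
  qed
  have nonneg: "0 \<le> integral {a..b} G" for a b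
    by (rule integral_nonneg) (use G_int G_nonneg in auto)
  have split: "integral {a..b} G + integral {b..d} G = integral {a..d} G" if "a \<le> b" "b \<le> d" for a b d
    by (rule Henstock_Kurzweil_Integration.integral_combine) (use that G_int in auto)
  show ?thesis
  proof (cases "y' \<le> y + s")
    case True
    then show ?thesis
      using split[of y y' "y+s"] split[of y' "y+s" "y'+s"] le[of y y'] nonneg[of "y+s" "y'+s"] assms
      by linarith
  next
    case False
    have "0 \<le> c" using G_nonneg G_le order_trans by blast
    then have "c * s \<le> c * (y' - y)" using False by (intro mult_left_mono) auto
    moreover have "integral {y..y+s} G \<le> c * s" using le[of y "y+s"] \<open>0 \<le> s\<close> by simp
    ultimately show ?thesis using nonneg[of y' "y'+s"] by linarith
  qed
qed

lemma measure_corner_diff_le_tail_diff: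
  fixes M :: "('a::topological_space \<times> 'b::linorder_topology) measure"
  assumes M: "finite_measure M" "sets M = sets borel" and "closed A" "Y \<le> Y'"
  shows "0 \<le> measure M (A \<times> {Y..}) - measure M (A \<times> {Y'..})"
    and "measure M (A \<times> {Y..}) - measure M (A \<times> {Y'..})
           \<le> measure M (UNIV \<times> {Y..}) - measure M (UNIV \<times> {Y'..})"
proof -
  interpret finite_measure M by fact
  have meas: "B \<times> {Z..} \<in> sets M" if "closed B" for B and Z :: 'b
    unfolding M(2) by (intro borel_closed closed_Times that closed_atLeast)
  have diff: "measure M (B \<times> {Y..}) - measure M (B \<times> {Y'..}) = measure M (B \<times> {Y..} - B \<times> {Y'..})"
    if "closed B" for B
    using \<open>Y \<le> Y'\<close> by (intro finite_measure_Diff[symmetric] meas that) auto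
  show "0 \<le> measure M (A \<times> {Y..}) - measure M (A \<times> {Y'..})"
    by (simp add: diff \<open>closed A\<close>)
  show "measure M (A \<times> {Y..}) - measure M (A \<times> {Y'..})
          \<le> measure M (UNIV \<times> {Y..}) - measure M (UNIV \<times> {Y'..})"
    unfolding diff[OF \<open>closed A\<close>] diff[OF closed_UNIV]
    by (intro finite_measure_mono sets.Diff meas closed_UNIV) auto
qed

lemma integral_corner_diff_bounds:
  fixes M :: "(ennreal \<times> ennreal) measure" and a :: "real \<Rightarrow> ennreal"
  assumes M: "finite_measure M" "sets M = sets borel"
    and a: "antimono_on {0..s} a" and "0 \<le> s" "y \<le> y'"
  defines "I w \<equiv> integral {0..s} (\<lambda>u. measure M ({a u..} \<times> {ennreal (w + s - u)..}))"
  shows "0 \<le> I y - I y'" and "I y - I y' \<le> measure M UNIV * (y' - y)"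
proof -
  interpret finite_measure M by fact
  have meas: "B \<times> {Z..} \<in> sets M" if "closed B" for B :: "ennreal set" and Z
    unfolding M(2) by (intro borel_closed closed_Times that closed_atLeast)
  define g where "g w u = measure M ({a u..} \<times> {ennreal (w + s - u)..})" for w u
  define G where "G w = measure M (UNIV \<times> {ennreal w..})" for w
  have G_antimono: "G w' \<le> G w" if "w \<le> w'" for w w'
    unfolding G_def using that
    by (intro finite_measure_mono meas closed_UNIV) (auto intro: order_trans[OF ennreal_leI])
  have G_int: "G integrable_on {p..q}" for p q
    using integrable_on_mono_on[of p q "\<lambda>w. - G w"] G_antimono
    by (auto simp: monotone_on_def dest: integrable_neg)
  have G_bounds: "0 \<le> G w" "G w \<le> measure M UNIV" for w
    unfolding G_def using bounded_measure sets_eq_imp_space_eq[OF M(2)] by auto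
  have g_int: "g w integrable_on {0..s}" for w
  proof (rule integrable_on_mono_on, rule monotone_onI)
    fix u v assume "u \<in> {0..s}" "v \<in> {0..s}" "u \<le> v"
    then have "a v \<le> a u" "ennreal (w + s - v) \<le> ennreal (w + s - u)"
      using a by (auto simp: monotone_on_def intro: ennreal_leI)
    then have "{a u..} \<times> {ennreal (w + s - u)..} \<subseteq> {a v..} \<times> {ennreal (w + s - v)..}"
      by (auto intro: order_trans)
    then show "g w u \<le> g w v"
      unfolding g_def by (intro finite_measure_mono meas closed_atLeast)
  qed
  have G_reflected_int: "(\<lambda>u. G (w + s - u)) integrable_on {0..s}" for w
    by (rule integrable_on_mono_on) (auto simp: monotone_on_def intro: G_antimono)
  have pointwise: "0 \<le> g y u - g y' u" "g y u - g y' u \<le> G (y + s - u) - G (y' + s - u)" for u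
    unfolding g_def G_def using \<open>y \<le> y'\<close>
    by (intro measure_corner_diff_le_tail_diff[OF M] closed_atLeast ennreal_leI; simp)+
  have I_diff: "I y - I y' = integral {0..s} (\<lambda>u. g y u - g y' u)"
    unfolding I_def g_def[symmetric] by (rule integral_diff[OF g_int g_int, symmetric])
  show "0 \<le> I y - I y'"
    unfolding I_diff by (rule integral_nonneg) (use g_int pointwise in \<open>auto intro: integrable_diff\<close>)
  have "I y - I y' \<le> integral {0..s} (\<lambda>u. G (y + s - u) - G (y' + s - u))"
    unfolding I_diff by (rule integral_le) (use g_int G_reflected_int pointwise in \<open>auto intro: integrable_diff\<close>)
  also have "\<dots> = integral {y..y+s} G - integral {y'..y'+s} G"
    by (simp add: integral_diff[OF G_reflected_int G_reflected_int] integral_reflect_shift_Icc)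
  also have "\<dots> \<le> measure M UNIV * (y' - y)"
    by (rule integral_window_diff_le) (use G_int G_bounds assms in auto)
  finally show "I y - I y' \<le> measure M UNIV * (y' - y)" .
qed

text \<open>This needs no integrability: a non-integrable integrand has integral 0.\<close>

lemma Sfun_nonneg: "0 \<le> Sfun \<zeta> u v"
proof (cases "(\<lambda>s. 1 / total_mass \<zeta> s) integrable_on {u..v}")
  case True
  then show ?thesis
    unfolding Sfun_def by (rule integral_nonneg) (simp add: total_mass_def)
qed (simp add: Sfun_def not_integrable_integral)

locale fluid_model =
  fixes lam :: real and \<theta> \<zeta>0 :: "(ennreal \<times> ennreal) measure"
    and \<zeta> :: "real \<Rightarrow> (ennreal \<times> ennreal) measure"
  assumes data: "fluid_data lam \<theta> \<zeta>0"
    and z0_pos: "0 < measure \<zeta>0 UNIV"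
    and sol: "fluid_solution lam \<theta> \<zeta>0 \<zeta>"
begin

abbreviation z0 :: real where "z0 \<equiv> measure \<zeta>0 UNIV"

abbreviation z :: "real \<Rightarrow> real" where "z \<equiv> total_mass \<zeta>"

lemma lam_pos: "0 < lam"
  and prob_space_\<theta>: "prob_space \<theta>" and sets_\<theta>: "sets \<theta> = sets borel"
  and finite_measure_\<zeta>0: "finite_measure \<zeta>0" and space_\<zeta>0: "space \<zeta>0 = UNIV"
  using data sets_eq_imp_space_eq[of \<zeta>0 borel] by (auto simp: fluid_data_def borel_finite_def)

lemma measure_\<theta>_UNIV: "measure \<theta> UNIV = 1"
  using prob_space.prob_space[OF prob_space_\<theta>] sets_eq_imp_space_eq[OF sets_\<theta>] by simp

lemma fluid_eq:
  assumes "C \<in> corner_sets" "0 \<le> t"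
  shows "measure (\<zeta> t) C = measure \<zeta>0 (shift C (Sfun \<zeta> 0 t) t)
           + lam * integral {0..t} (\<lambda>s. measure \<theta> (shift C (Sfun \<zeta> s t) (t - s)))"
  using sol assms by (simp add: fluid_solution_def)

lemma total_mass_0: "z 0 = z0"
  using fluid_eq[OF corner_in_corner_sets[of 0 0], of 0]
  by (simp add: UNIV_eq_corner[symmetric] shift_def Sfun_def total_mass_def)

lemma total_mass_le:
  assumes "0 \<le> t"
  shows "z t \<le> z0 + lam * t"
proof -
  have initial: "measure \<zeta>0 (shift UNIV (Sfun \<zeta> 0 t) t) \<le> z0"
    using finite_measure.bounded_measure[OF finite_measure_\<zeta>0] space_\<zeta>0 by simp
  have arrivals: "integral {0..t} (\<lambda>s. measure \<theta> (shift UNIV (Sfun \<zeta> s t) (t - s))) \<le> t"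
  proof (cases "(\<lambda>s. measure \<theta> (shift UNIV (Sfun \<zeta> s t) (t - s))) integrable_on {0..t}")
    case True
    have "integral {0..t} (\<lambda>s. measure \<theta> (shift UNIV (Sfun \<zeta> s t) (t - s))) \<le> integral {0..t} (\<lambda>_. 1)"
      by (rule integral_le[OF True]) (auto simp: prob_space.prob_le_1[OF prob_space_\<theta>])
    then show ?thesis using assms by simp
  qed (use assms in \<open>simp add: not_integrable_integral\<close>)
  have "z t = measure \<zeta>0 (shift UNIV (Sfun \<zeta> 0 t) t)
      + lam * integral {0..t} (\<lambda>s. measure \<theta> (shift UNIV (Sfun \<zeta> s t) (t - s)))"
    using fluid_eq[OF corner_in_corner_sets[of 0 0] assms] by (simp add: UNIV_eq_corner[symmetric] total_mass_def)
  also have "\<dots> \<le> z0 + lam * t"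
    using initial arrivals lam_pos by (intro add_mono mult_left_mono) auto
  finally show ?thesis .
qed

lemma continuous_on_total_mass: "continuous_on {0..} z"
proof -
  have "\<forall>f :: ennreal \<times> ennreal \<Rightarrow> real. continuous_on UNIV f \<longrightarrow>
      continuous_on {0..} (\<lambda>t. \<integral>p. f p \<partial>\<zeta> t)"
    using sol by (simp add: fluid_solution_def weakly_continuous_def)
  from this[rule_format, OF continuous_on_const[where c = 1]]
  have "continuous_on {0..} (\<lambda>t. \<integral>p. (1::real) \<partial>\<zeta> t)" .
  moreover have "(\<integral>p. (1::real) \<partial>\<zeta> t) = z t" if "t \<in> {0..}" for t
  proof -
    have "sets (\<zeta> t) = sets borel"
      using sol that by (auto simp: fluid_solution_def weakly_continuous_def borel_finite_def)
    then show ?thesis by (simp add: total_mass_def sets_eq_imp_space_eq)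
  qed
  ultimately show ?thesis by (rule continuous_on_eq)
qed

lemma total_mass_pos:
  assumes "0 \<le> t"
  shows "0 < z t"
proof (cases "t = 0")
  case True
  then show ?thesis using total_mass_0 z0_pos by simp
next
  case False
  then have "0 < (INF u\<in>{t/2<..}. z u)"
    using sol assms by (simp add: fluid_solution_def)
  also have "\<dots> \<le> z t"
    using False assms by (intro cINF_lower bdd_belowI[of _ 0]) (auto simp: total_mass_def)
  finally show ?thesis .
qed

lemma integrable_inverse_total_mass:
  assumes "0 \<le> a"
  shows "(\<lambda>u. 1 / z u) integrable_on {a..b}"
proof -
  have "continuous_on {0..} (\<lambda>u. 1 / z u)"
    using total_mass_pos by (intro continuous_intros continuous_on_total_mass) force
  then show ?thesis
    by (rule integrable_continuous_interval[OF continuous_on_subset]) (use assms in auto)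
qed

lemma Sfun_antimono:
  assumes "0 \<le> u" "u \<le> v" "v \<le> s"
  shows "Sfun \<zeta> v s \<le> Sfun \<zeta> u s"
proof -
  have "integral {u..v} (\<lambda>r. 1 / z r) + Sfun \<zeta> v s = Sfun \<zeta> u s"
    unfolding Sfun_def
    by (rule Henstock_Kurzweil_Integration.integral_combine)
      (use assms integrable_inverse_total_mass in auto)
  moreover have "0 \<le> integral {u..v} (\<lambda>r. 1 / z r)"
    by (rule integral_nonneg) (use assms integrable_inverse_total_mass in \<open>auto simp: total_mass_def\<close>)
  ultimately show ?thesis by linarith
qed

lemma Sfun_ge_ln:
  assumes "0 \<le> s"
  shows "(ln (z0 + lam * s) - ln z0) / lam \<le> Sfun \<zeta> 0 s"
proof -
  have "((\<lambda>u. 1 / (z0 + lam * u)) has_integral (ln (z0 + lam * s) / lam - ln (z0 + lam * 0) / lam)) {0..s}"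
  proof (rule fundamental_theorem_of_calculus)
    fix u assume "u \<in> {0..s}"
    then have "0 < z0 + lam * u" using z0_pos lam_pos by (simp add: add_pos_nonneg)
    then have "((\<lambda>u. ln (z0 + lam * u) / lam) has_real_derivative 1 / (z0 + lam * u)) (at u)"
      using lam_pos by (auto intro!: derivative_eq_intros simp: divide_simps)
    then show "((\<lambda>u. ln (z0 + lam * u) / lam) has_vector_derivative 1 / (z0 + lam * u)) (at u within {0..s})"
      by (simp add: has_real_derivative_iff_has_vector_derivative[symmetric] has_field_derivative_at_within)
  qed (use assms in simp)
  then have "(ln (z0 + lam * s) - ln z0) / lam = integral {0..s} (\<lambda>u. 1 / (z0 + lam * u))"
    by (simp add: integral_unique diff_divide_distrib)
  also have "\<dots> \<le> integral {0..s} (\<lambda>u. 1 / z u)"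
  proof (rule integral_le)
    show "(\<lambda>u. 1 / (z0 + lam * u)) integrable_on {0..s}"
      using \<open>(_ has_integral _) {0..s}\<close> by blast
    show "(\<lambda>u. 1 / z u) integrable_on {0..s}" by (rule integrable_inverse_total_mass) simp
    show "1 / (z0 + lam * u) \<le> 1 / z u" if "u \<in> {0..s}" for u
      using that total_mass_pos[of u] total_mass_le[of u] by (intro divide_left_mono) auto
  qed
  finally show ?thesis unfolding Sfun_def .
qed

lemma Stilde_nonneg: "0 \<le> Stilde \<zeta> t"
proof -
  \<comment> \<open>A witness is needed: the infimum of the empty set of reals is unspecified.\<close>
  define s where "s = z0 * (exp (lam * max t 0) - 1) / lam"
  have "0 \<le> s"
    unfolding s_def using z0_pos lam_pos by (intro divide_nonneg_pos mult_nonneg_nonneg) auto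
  have "z0 + lam * s = z0 * exp (lam * max t 0)"
    unfolding s_def using lam_pos by (simp add: field_simps)
  then have "(ln (z0 + lam * s) - ln z0) / lam = max t 0"
    using z0_pos lam_pos by (simp add: ln_mult)
  then have "t \<le> Sfun \<zeta> 0 s"
    using Sfun_ge_ln[OF \<open>0 \<le> s\<close>] by linarith
  then show ?thesis
    unfolding Stilde_def by (intro cInf_greatest) (use \<open>0 \<le> s\<close> in auto)
qed

lemma corner_measure_eq:
  assumes "0 \<le> s" "0 \<le> y"
  shows "measure (\<zeta> s) ({X..} \<times> {ennreal y..})
    = measure \<zeta>0 ({X + ennreal (Sfun \<zeta> 0 s)..} \<times> {ennreal (y + s)..})
      + lam * integral {0..s} (\<lambda>u. measure \<theta> ({X + ennreal (Sfun \<zeta> u s)..} \<times> {ennreal (y + s - u)..}))"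
proof -
  let ?C = "{X..} \<times> {ennreal y..}"
  have "shift ?C (Sfun \<zeta> 0 s) s = {X + ennreal (Sfun \<zeta> 0 s)..} \<times> {ennreal (y + s)..}"
    using assms by (simp add: shift_corner ennreal_plus)
  moreover have "integral {0..s} (\<lambda>u. measure \<theta> (shift ?C (Sfun \<zeta> u s) (s - u)))
      = integral {0..s} (\<lambda>u. measure \<theta> ({X + ennreal (Sfun \<zeta> u s)..} \<times> {ennreal (y + s - u)..}))"
  proof (rule integral_cong)
    fix u assume "u \<in> {0..s}"
    then have "ennreal y + ennreal (s - u) = ennreal (y + s - u)"
      using assms by (simp add: ennreal_plus[symmetric] add_diff_eq)
    then show "measure \<theta> (shift ?C (Sfun \<zeta> u s) (s - u))
        = measure \<theta> ({X + ennreal (Sfun \<zeta> u s)..} \<times> {ennreal (y + s - u)..})"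
      by (simp add: shift_corner)
  qed
  ultimately show ?thesis
    using fluid_eq[OF corner_in_corner_sets assms(1)] by simp
qed

lemma corner_measure_diff_le:
  assumes lip: "\<And>x y y'. 0 \<le> x \<Longrightarrow> 0 \<le> y \<Longrightarrow> 0 \<le> y' \<Longrightarrow>
      \<bar>measure \<zeta>0 ({ennreal x..} \<times> {ennreal y..}) / z0
       - measure \<zeta>0 ({ennreal x..} \<times> {ennreal y'..}) / z0\<bar> \<le> L * \<bar>y - y'\<bar>"
    and "0 \<le> s" "0 \<le> x" "0 \<le> y" "y \<le> y'"
  shows "\<bar>measure (\<zeta> s) ({ennreal x..} \<times> {ennreal y..}) - measure (\<zeta> s) ({ennreal x..} \<times> {ennreal y'..})\<bar>
           \<le> (z0 * L + lam) * (y' - y)"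
proof -
  define X where "X = x + Sfun \<zeta> 0 s"
  define m where "m w = measure \<zeta>0 ({ennreal X..} \<times> {ennreal (w + s)..})" for w
  define I where "I w = integral {0..s}
    (\<lambda>u. measure \<theta> ({ennreal x + ennreal (Sfun \<zeta> u s)..} \<times> {ennreal (w + s - u)..}))" for w
  have decomp: "measure (\<zeta> s) ({ennreal x..} \<times> {ennreal w..}) = m w + lam * I w" if "0 \<le> w" for w
    unfolding m_def I_def X_def
    using corner_measure_eq[OF \<open>0 \<le> s\<close> that] \<open>0 \<le> x\<close> by (simp add: ennreal_plus Sfun_nonneg)
  have "\<bar>m y / z0 - m y' / z0\<bar> \<le> L * \<bar>(y + s) - (y' + s)\<bar>"
    unfolding m_def X_def by (rule lip) (use assms Sfun_nonneg in auto)
  then have m_diff: "\<bar>m y - m y'\<bar> \<le> z0 * L * (y' - y)"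
    using z0_pos \<open>y \<le> y'\<close> by (simp add: diff_divide_distrib[symmetric] abs_divide field_simps)
  have "antimono_on {0..s} (\<lambda>u. ennreal x + ennreal (Sfun \<zeta> u s))"
    by (intro monotone_onI add_left_mono ennreal_leI Sfun_antimono) auto
  from integral_corner_diff_bounds[OF prob_space.finite_measure[OF prob_space_\<theta>] sets_\<theta> this \<open>0 \<le> s\<close> \<open>y \<le> y'\<close>]
  have "0 \<le> I y - I y'" "I y - I y' \<le> y' - y"
    unfolding I_def measure_\<theta>_UNIV by simp_all
  then have I_diff: "\<bar>lam * (I y - I y')\<bar> \<le> lam * (y' - y)"
    using lam_pos by (simp add: abs_mult)
  have "\<bar>measure (\<zeta> s) ({ennreal x..} \<times> {ennreal y..}) - measure (\<zeta> s) ({ennreal x..} \<times> {ennreal y'..})\<bar>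
      = \<bar>(m y - m y') + lam * (I y - I y')\<bar>"
    using decomp[of y] decomp[of y'] \<open>0 \<le> y\<close> \<open>y \<le> y'\<close> by (simp add: algebra_simps)
  also have "\<dots> \<le> \<bar>m y - m y'\<bar> + \<bar>lam * (I y - I y')\<bar>"
    by (rule abs_triangle_ineq)
  also have "\<dots> \<le> (z0 * L + lam) * (y' - y)"
    using m_diff I_diff distrib_right[of "z0 * L" lam "y' - y"] by linarith
  finally show ?thesis .
qed

end

theorem mainTheorem9:
  fixes lam L :: real and \<theta> \<zeta>0 :: "(ennreal \<times> ennreal) measure"
    and \<zeta> :: "real \<Rightarrow> (ennreal \<times> ennreal) measure"
  assumes data: "fluid_data lam \<theta> \<zeta>0"
    and z0_pos: "measure \<zeta>0 UNIV > 0"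
    and lip: "\<And>x y y'. 0 \<le> x \<Longrightarrow> 0 \<le> y \<Longrightarrow> 0 \<le> y' \<Longrightarrow>
      \<bar>measure \<zeta>0 ({ennreal x..} \<times> {ennreal y..}) / measure \<zeta>0 UNIV
       - measure \<zeta>0 ({ennreal x..} \<times> {ennreal y'..}) / measure \<zeta>0 UNIV\<bar> \<le> L * \<bar>y - y'\<bar>"
    and sol: "fluid_solution lam \<theta> \<zeta>0 \<zeta>"
    and x: "0 \<le> x" and y: "0 \<le> y" and y': "0 \<le> y'" and t: "0 \<le> t"
  shows "\<bar>zeta_tilde \<zeta> t x y - zeta_tilde \<zeta> t x y'\<bar>
           \<le> (measure \<zeta>0 UNIV * L + lam) * \<bar>y - y'\<bar>"
proof -
  interpret fluid_model lam \<theta> \<zeta>0 \<zeta>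
    using data z0_pos sol by unfold_locales
  have bound: "\<bar>zeta_tilde \<zeta> t x a - zeta_tilde \<zeta> t x b\<bar> \<le> (z0 * L + lam) * (b - a)"
    if "0 \<le> a" "a \<le> b" for a b
    unfolding zeta_tilde_def using lip Stilde_nonneg x that by (rule corner_measure_diff_le)
  show ?thesis
  proof (cases "y \<le> y'")
    case True
    then show ?thesis using bound[OF y] by simp
  next
    case False
    then show ?thesis using bound[OF y'] by (simp add: abs_minus_commute)
  qed
qed

end
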